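(* Let $a,b$ be integers and let $G\in\mathscr{G}_{a,b}$ be a graph containing a cycle and at least one pendant vertex, with base $\widetilde G$. (i) If $u\in V_{\widetilde G}$, then $d_G(u)\in\{d_{\widetilde G}(u),\,a+b-1\}$; if $u\notin V_{\widetilde G}$, then $d_G(u)=1$. (ii) If $u\in V_{\widetilde G}$ is an attached vertex, then $b\le -1$, $d_G(u)=a+b-1>d_{\widetilde G}(u)$, and $\sum_{v\in N_{\widetilde G}(u)}d_G(v)=-ab-b^2+2b+d_{\widetilde G}(u)$.
   Context: All graphs are simple and connected; $d_G(v)$ is the degree of $v$, $N_G(v)$ its neighbourhood. For integers $a,b$, $\mathscr{G}_{a,b}$ is the set of connected graphs $G$ such that for every $v\in V_G$, $\sum_{u\in N_G(v)}d_G(u)=a\,d_G(v)+b-d_G(v)^2$. A pendant vertex is a vertex of degree $1$. The base $\widetilde{G}$ of $G$ is the subgraph obtained from $G$ by repeatedly deleting pendant vertices until none remain. A vertex $u\in V_{\widetilde G}$ is called an attached vertex if it is adjacent in $G$ to some pendant vertex, and a non-attached vertex otherwise. *)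

theory Defs
  imports Main
begin

text \<open>For a vertex subset W, degrees/neighbourhoods in the induced subgraph G[W]
are obtained by passing W as the vertex set.\<close>

definition simple_graph :: "'a set \<Rightarrow> ('a \<Rightarrow> 'a \<Rightarrow> bool) \<Rightarrow> bool" where
  "simple_graph V E \<longleftrightarrow> finite V \<and> (\<forall>u v. E u v \<longrightarrow> E v u)
     \<and> (\<forall>v. \<not> E v v) \<and> (\<forall>u v. E u v \<longrightarrow> u \<in> V \<and> v \<in> V)"

definition nbhd :: "'a set \<Rightarrow> ('a \<Rightarrow> 'a \<Rightarrow> bool) \<Rightarrow> 'a \<Rightarrow> 'a set" where
  "nbhd V E v = {u \<in> V. E v u}"

definition deg :: "'a set \<Rightarrow> ('a \<Rightarrow> 'a \<Rightarrow> bool) \<Rightarrow> 'a \<Rightarrow> nat" where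
  "deg V E v = card (nbhd V E v)"

definition connected_graph :: "'a set \<Rightarrow> ('a \<Rightarrow> 'a \<Rightarrow> bool) \<Rightarrow> bool" where
  "connected_graph V E \<longleftrightarrow> V \<noteq> {} \<and>
     (\<forall>u\<in>V. \<forall>v\<in>V. (\<lambda>x y. x \<in> V \<and> y \<in> V \<and> E x y)\<^sup>*\<^sup>* u v)"

definition has_cycle :: "'a set \<Rightarrow> ('a \<Rightarrow> 'a \<Rightarrow> bool) \<Rightarrow> bool" where
  "has_cycle V E \<longleftrightarrow> (\<exists>xs. length xs \<ge> 3 \<and> distinct xs \<and> set xs \<subseteq> V
     \<and> (\<forall>i. Suc i < length xs \<longrightarrow> E (xs ! i) (xs ! Suc i))
     \<and> E (last xs) (hd xs))"

definition in_class_G :: "int \<Rightarrow> int \<Rightarrow> 'a set \<Rightarrow> ('a \<Rightarrow> 'a \<Rightarrow> bool) \<Rightarrow> bool" where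
  "in_class_G a b V E \<longleftrightarrow> simple_graph V E \<and> connected_graph V E \<and>
     (\<forall>v\<in>V. (\<Sum>u\<in>nbhd V E v. int (deg V E u))
              = a * int (deg V E v) + b - int (deg V E v) ^ 2)"

definition pendant :: "'a set \<Rightarrow> ('a \<Rightarrow> 'a \<Rightarrow> bool) \<Rightarrow> 'a \<Rightarrow> bool" where
  "pendant V E v \<longleftrightarrow> v \<in> V \<and> deg V E v = 1"

definition prune_step :: "('a \<Rightarrow> 'a \<Rightarrow> bool) \<Rightarrow> 'a set \<Rightarrow> 'a set \<Rightarrow> bool" where
  "prune_step E S T \<longleftrightarrow> (\<exists>v. pendant S E v \<and> T = S - {v})"

definition is_base :: "'a set \<Rightarrow> ('a \<Rightarrow> 'a \<Rightarrow> bool) \<Rightarrow> 'a set \<Rightarrow> bool" where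
  "is_base V E W \<longleftrightarrow> (prune_step E)\<^sup>*\<^sup>* V W \<and> (\<forall>v. \<not> pendant W E v)"

definition attached :: "'a set \<Rightarrow> ('a \<Rightarrow> 'a \<Rightarrow> bool) \<Rightarrow> 'a set \<Rightarrow> 'a \<Rightarrow> bool" where
  "attached V E W u \<longleftrightarrow> u \<in> W \<and> (\<exists>p. pendant V E p \<and> E u p)"

end

theory Submission
  imports Defs
begin

text \<open>A pendant vertex forces its neighbour to have degree \<open>a + b - 1\<close>. If a vertex \<open>x\<close> of
  degree at least 2 had all neighbours but one, \<open>y\<close>, pendant, the degree equations at \<open>x\<close> and
  \<open>y\<close> would force all other neighbours of \<open>y\<close> to be pendant too; then \<open>G\<close> is a double star
  and has no cycle. Consequently pruning only ever deletes vertices that are already pendant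
  in \<open>G\<close>, i.e. \<open>V - W\<close> consists of pendant vertices of \<open>G\<close>. For an attached vertex \<open>u\<close> the
  degree equation at \<open>u\<close> then yields the neighbour sum over the base; if \<open>b \<ge> 0\<close> that sum is at
  most \<open>d\<^sub>W(u)\<close>, although every base neighbour of \<open>u\<close> has degree at least 2, so \<open>u\<close> would be
  the centre of a star.\<close>

lemma simple_graph_finite: "simple_graph V E \<Longrightarrow> finite V"
  unfolding simple_graph_def by blast

lemma finite_nbhd: "simple_graph V E \<Longrightarrow> finite (nbhd V E v)"
  unfolding simple_graph_def nbhd_def by auto

lemma nbhd_subgraph: "W \<subseteq> V \<Longrightarrow> nbhd W E u = nbhd V E u \<inter> W"
  unfolding nbhd_def by blast

lemma deg_subgraph_le:
  assumes "simple_graph V E" "W \<subseteq> V"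
  shows "deg W E u \<le> deg V E u"
  unfolding deg_def using assms by (simp add: nbhd_subgraph card_mono finite_nbhd)

lemma deg_ge_1I:
  assumes "finite V" "u \<in> nbhd V E v"
  shows "deg V E v \<ge> 1"
proof -
  have "finite (nbhd V E v)" using assms(1) unfolding nbhd_def by simp
  thus ?thesis using assms(2) unfolding deg_def by (metis One_nat_def Suc_leI card_gt_0_iff empty_iff)
qed

lemma deg_ge_2I:
  assumes "simple_graph V E" "E v p" "E v q" "p \<noteq> q"
  shows "deg V E v \<ge> 2"
proof -
  have "{p, q} \<subseteq> nbhd V E v"
    using assms unfolding simple_graph_def nbhd_def by auto
  hence "card {p, q} \<le> deg V E v"
    unfolding deg_def by (intro card_mono finite_nbhd assms(1))
  thus ?thesis using assms(4) by simp
qed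

lemma nbhd_pendant:
  assumes "simple_graph V E" "deg V E p = 1" "E p x"
  shows "nbhd V E p = {x}"
proof -
  have "x \<in> nbhd V E p" using assms unfolding simple_graph_def nbhd_def by auto
  moreover obtain z where "nbhd V E p = {z}"
    using assms(2) unfolding deg_def by (metis card_1_singletonE)
  ultimately show ?thesis by auto
qed

lemma has_cycle_obtains_deg_ge_2:
  assumes sg: "simple_graph V E" and "has_cycle V E"
  obtains C where "C \<subseteq> V" "card C \<ge> 3" "\<forall>v\<in>C. deg V E v \<ge> 2"
proof -
  obtain xs where len: "length xs \<ge> 3" and dist: "distinct xs" and sub: "set xs \<subseteq> V"
    and path: "\<forall>i. Suc i < length xs \<longrightarrow> E (xs ! i) (xs ! Suc i)"
    and close: "E (last xs) (hd xs)"
    using assms(2) unfolding has_cycle_def by blast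
  define n where "n = length xs"
  have sym: "E v u" if "E u v" for u v using sg that unfolding simple_graph_def by blast
  have succ_edge: "E (xs ! i) (xs ! (Suc i mod n))" if "i < n" for i
  proof (cases "Suc i < n")
    case True thus ?thesis using path n_def by simp
  next
    case False
    hence "Suc i = n" using that by simp
    hence "i = n - 1" "Suc i mod n = 0" by auto
    moreover have "xs \<noteq> []" using len by auto
    ultimately show ?thesis using close n_def by (simp add: hd_conv_nth last_conv_nth)
  qed
  have "\<forall>v\<in>set xs. deg V E v \<ge> 2"
  proof
    fix v assume "v \<in> set xs"
    then obtain i where i: "i < n" "v = xs ! i" by (metis in_set_conv_nth n_def)
    define j where "j = (if i = 0 then n - 1 else i - 1)"
    have "j < n" "Suc j mod n = i" using i len n_def unfolding j_def by auto
    hence pred_edge: "E v (xs ! j)" using succ_edge[of j] sym i by simp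
    have "Suc i mod n \<noteq> j"
    proof (cases "Suc i < n")
      case True thus ?thesis using len n_def unfolding j_def by auto
    next
      case False
      hence "Suc i = n" using i by simp
      thus ?thesis using len n_def unfolding j_def by auto
    qed
    moreover have "Suc i mod n < n" using i by simp
    ultimately have "xs ! (Suc i mod n) \<noteq> xs ! j"
      using dist \<open>j < n\<close> len n_def by (simp add: nth_eq_iff_index_eq)
    thus "deg V E v \<ge> 2" using deg_ge_2I[OF sg _ pred_edge] succ_edge i by metis
  qed
  moreover have "card (set xs) \<ge> 3" using len dist by (simp add: distinct_card)
  ultimately show ?thesis using that sub by blast
qed

lemma connected_graph_closed_subset:
  assumes "connected_graph V E" "x \<in> V" "x \<in> S" "\<And>v w. v \<in> S \<Longrightarrow> E v w \<Longrightarrow> w \<in> S"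
  shows "V \<subseteq> S"
proof
  fix v assume "v \<in> V"
  hence "(\<lambda>x y. x \<in> V \<and> y \<in> V \<and> E x y)\<^sup>*\<^sup>* x v"
    using assms(1,2) unfolding connected_graph_def by blast
  thus "v \<in> S" by (induction rule: rtranclp_induct) (use assms in auto)
qed

lemma double_star_no_cycle:
  assumes sg: "simple_graph V E" and cg: "connected_graph V E" and "x \<in> V"
    and pend_x: "\<forall>z\<in>nbhd V E x - {y}. deg V E z = 1"
    and pend_y: "\<forall>z\<in>nbhd V E y - {x}. deg V E z = 1"
  shows "\<not> has_cycle V E"
proof
  assume "has_cycle V E"
  then obtain C where C: "C \<subseteq> V" "card C \<ge> 3" "\<forall>v\<in>C. deg V E v \<ge> 2"
    using has_cycle_obtains_deg_ge_2[OF sg] by blast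
  define S where "S = {x, y} \<union> nbhd V E x \<union> nbhd V E y"
  have "V \<subseteq> S"
  proof (rule connected_graph_closed_subset[OF cg \<open>x \<in> V\<close>])
    show "x \<in> S" unfolding S_def by blast
    fix v w assume "v \<in> S" "E v w"
    hence "w \<in> V" using sg unfolding simple_graph_def by blast
    show "w \<in> S"
    proof (cases "v \<in> {x, y}")
      case True thus ?thesis using \<open>E v w\<close> \<open>w \<in> V\<close> unfolding S_def nbhd_def by auto
    next
      case False
      hence "deg V E v = 1" "E v x \<or> E v y"
        using \<open>v \<in> S\<close> pend_x pend_y sg unfolding S_def nbhd_def simple_graph_def by auto
      hence "w = x \<or> w = y"
        using nbhd_pendant[OF sg] \<open>E v w\<close> \<open>w \<in> V\<close> unfolding nbhd_def by blast
      thus ?thesis unfolding S_def by blast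
    qed
  qed
  have "C \<subseteq> {x, y}"
  proof
    fix v assume "v \<in> C"
    hence "v \<in> S" "deg V E v \<ge> 2" using C \<open>V \<subseteq> S\<close> by auto
    show "v \<in> {x, y}"
    proof (rule ccontr)
      assume "v \<notin> {x, y}"
      hence "deg V E v = 1" using \<open>v \<in> S\<close> pend_x pend_y unfolding S_def by blast
      thus False using \<open>deg V E v \<ge> 2\<close> by simp
    qed
  qed
  hence "card C \<le> card {x, y}" by (intro card_mono) auto
  also have "\<dots> \<le> 2" by (simp add: card_insert_if)
  finally have "card C \<le> 2" .
  thus False using C by simp
qed

lemma sum_le_card_imp_eq_1:
  fixes f :: "'b \<Rightarrow> int"
  assumes "finite A" "\<forall>z\<in>A. f z \<ge> 1" "sum f A \<le> int (card A)"
  shows "\<forall>z\<in>A. f z = 1"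
proof -
  have "(\<Sum>z\<in>A. f z - 1) = sum f A - int (card A)" by (simp add: sum_subtractf)
  hence "(\<Sum>z\<in>A. f z - 1) = 0"
    using assms(2,3) sum_nonneg[of A "\<lambda>z. f z - 1"] by fastforce
  thus ?thesis using assms(1,2) sum_nonneg_eq_0_iff[of A "\<lambda>z. f z - 1"] by fastforce
qed

lemma in_class_GD:
  assumes "in_class_G a b V E"
  shows "simple_graph V E" and "connected_graph V E"
    and "v \<in> V \<Longrightarrow> (\<Sum>u\<in>nbhd V E v. int (deg V E u)) = a * int (deg V E v) + b - int (deg V E v) ^ 2"
  using assms unfolding in_class_G_def by blast+

lemma in_class_G_deg_pendant_neighbour:
  assumes cl: "in_class_G a b V E" and "deg V E p = 1" "E p x"
  shows "int (deg V E x) = a + b - 1"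
proof -
  have "p \<in> V" using in_class_GD(1)[OF cl] \<open>E p x\<close> unfolding simple_graph_def by blast
  thus ?thesis using in_class_GD(3)[OF cl] nbhd_pendant[OF in_class_GD(1)[OF cl] assms(2,3)] assms(2)
    by fastforce
qed

text \<open>The degree equations at \<open>x\<close> (degree \<open>k\<close>, all neighbours but \<open>y\<close> pendant) and at \<open>y\<close>
  (degree \<open>d\<close>, other neighbours' degrees summing to \<open>t\<close>) combine to
  \<open>t - (d - 1) = (k - 1)(k - 2)(-b)(1 + b)\<close>, which is never positive since \<open>b(1 + b) \<ge> 0\<close>
  for integers.\<close>
lemma class_G_second_neighbourhood_bound:
  fixes a b k d t :: int
  assumes k: "k = a + b - 1" and "k \<ge> 2"
    and eq_x: "d + (k - 1) = a * k + b - k ^ 2" and eq_y: "k + t = a * d + b - d ^ 2"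
  shows "t \<le> d - 1"
proof -
  have "t - (d - 1) = (k - 1) * (k - 2) * -(b * (1 + b))"
  proof -
    have a: "a = k + 1 - b" and d: "d = a * k + b - k ^ 2 - k + 1" using k eq_x by simp_all
    have "t = a * d + b - d ^ 2 - k" using eq_y by simp
    thus ?thesis unfolding d a by (simp add: algebra_simps power2_eq_square)
  qed
  moreover have "b * (1 + b) \<ge> 0" by (cases "b \<ge> 0") (simp_all add: mult_nonpos_nonpos)
  moreover have "(k - 1) * (k - 2) \<ge> 0" using \<open>k \<ge> 2\<close> by simp
  ultimately have "(k - 1) * (k - 2) * (b * (1 + b)) \<ge> 0" "t - (d - 1) = - ((k - 1) * (k - 2) * (b * (1 + b)))"
    by simp_all
  thus ?thesis by linarith
qed

lemma in_class_G_almost_pendant_no_cycle: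
  assumes cl: "in_class_G a b V E" and "x \<in> V" and "deg V E x \<ge> 2"
    and y: "y \<in> nbhd V E x" and pend_x: "\<forall>z\<in>nbhd V E x - {y}. deg V E z = 1"
  shows "\<not> has_cycle V E"
proof -
  note sg = in_class_GD(1)[OF cl] and degree_eq = in_class_GD(3)[OF cl]
  have sym: "E v u" if "E u v" for u v using sg that unfolding simple_graph_def by blast
  define N where "N = nbhd V E x"
  define M where "M = nbhd V E y"
  define k where "k = int (deg V E x)"
  define d where "d = int (deg V E y)"
  have fin: "finite N" "finite M" unfolding N_def M_def using finite_nbhd[OF sg] by blast+
  have yV: "y \<in> V" and xM: "x \<in> M" using y \<open>x \<in> V\<close> sym unfolding N_def M_def nbhd_def by auto
  have card_N: "card (N - {y}) = deg V E x - 1" and card_M: "card (M - {x}) = deg V E y - 1"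
    using fin y xM unfolding N_def M_def deg_def by simp_all
  have "N - {y} \<noteq> {}" using card_N \<open>deg V E x \<ge> 2\<close> by (intro notI) simp
  then obtain p where p: "p \<in> N - {y}" by blast
  hence "deg V E p = 1" "E p x" using pend_x sym unfolding N_def nbhd_def by auto
  hence k: "k = a + b - 1" using in_class_G_deg_pendant_neighbour[OF cl] k_def by blast
  have "(\<Sum>u\<in>N. int (deg V E u)) = d + (\<Sum>u\<in>N - {y}. 1)"
    using fin y pend_x unfolding N_def d_def by (simp add: sum.remove)
  hence eq_x: "d + (k - 1) = a * k + b - k ^ 2"
    using degree_eq[OF \<open>x \<in> V\<close>] card_N \<open>deg V E x \<ge> 2\<close> unfolding N_def k_def by simp
  define t where "t = (\<Sum>u\<in>M - {x}. int (deg V E u))"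
  have eq_y: "k + t = a * d + b - d ^ 2"
    using degree_eq[OF yV] fin xM unfolding M_def k_def d_def t_def by (simp add: sum.remove)
  have "t \<le> int (card (M - {x}))"
    using class_G_second_neighbourhood_bound[OF k _ eq_x eq_y] card_M xM fin \<open>deg V E x \<ge> 2\<close>
    unfolding k_def d_def M_def deg_def by (simp add: card_gt_0_iff)
  moreover have "\<forall>z\<in>M - {x}. int (deg V E z) \<ge> 1"
    using deg_ge_1I[OF simple_graph_finite[OF sg]] yV sym unfolding M_def nbhd_def by fastforce
  ultimately have pend_y: "\<forall>z\<in>M - {x}. deg V E z = 1"
    using sum_le_card_imp_eq_1[of "M - {x}" "\<lambda>z. int (deg V E z)"] fin unfolding t_def by simp
  show ?thesis
    using double_star_no_cycle[OF sg in_class_GD(2)[OF cl] \<open>x \<in> V\<close> pend_x] pend_y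
    unfolding M_def by blast
qed

lemma prune_steps_remove_pendants:
  assumes "(prune_step E)\<^sup>*\<^sup>* V S" and cl: "in_class_G a b V E" and "has_cycle V E"
  shows "S \<subseteq> V \<and> (\<forall>u\<in>V - S. deg V E u = 1)"
  using assms(1)
proof (induction rule: rtranclp_induct)
  case base thus ?case by simp
next
  case (step S T)
  note sg = in_class_GD(1)[OF cl]
  obtain v where pv: "pendant S E v" and T: "T = S - {v}"
    using step(2) unfolding prune_step_def by blast
  obtain y where y: "nbhd S E v = {y}"
    using pv unfolding pendant_def deg_def by (metis card_1_singletonE)
  have "S \<subseteq> V" and pend_outside: "\<forall>u\<in>V - S. deg V E u = 1" using step(3) by blast+
  have nbhd_S: "nbhd S E v = nbhd V E v \<inter> S" by (rule nbhd_subgraph[OF \<open>S \<subseteq> V\<close>])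
  have "v \<in> V" using pv \<open>S \<subseteq> V\<close> unfolding pendant_def by blast
  have "y \<in> nbhd V E v" using y nbhd_S by blast
  have "\<forall>z\<in>nbhd V E v - {y}. deg V E z = 1"
  proof
    fix z assume "z \<in> nbhd V E v - {y}"
    hence "z \<in> V - S" using y nbhd_S unfolding nbhd_def by blast
    thus "deg V E z = 1" using pend_outside by blast
  qed
  hence "\<not> deg V E v \<ge> 2"
    using in_class_G_almost_pendant_no_cycle[OF cl \<open>v \<in> V\<close> _ \<open>y \<in> nbhd V E v\<close>] \<open>has_cycle V E\<close>
    by blast
  moreover have "deg V E v \<ge> 1" using deg_ge_1I[OF simple_graph_finite[OF sg] \<open>y \<in> nbhd V E v\<close>] .
  ultimately show ?case using step(3) T by auto
qed

lemma is_base_in_class_GD: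
  assumes "is_base V E W" "in_class_G a b V E" "has_cycle V E"
  shows "W \<subseteq> V" and "\<forall>u\<in>V - W. deg V E u = 1" and "\<forall>v. \<not> pendant W E v"
  using prune_steps_remove_pendants[OF _ assms(2,3)] assms(1) unfolding is_base_def by blast+

lemma degree_sum_split_pendants:
  assumes sg: "simple_graph V E" and "W \<subseteq> V" and pend: "\<forall>v\<in>V - W. deg V E v = 1"
  shows "(\<Sum>v\<in>nbhd V E u. int (deg V E v))
           = int (deg V E u) - int (deg W E u) + (\<Sum>v\<in>nbhd W E u. int (deg V E v))"
proof -
  have sub: "nbhd W E u \<subseteq> nbhd V E u" and fin: "finite (nbhd V E u)"
    using nbhd_subgraph[OF \<open>W \<subseteq> V\<close>] finite_nbhd[OF sg] by auto
  have "(\<Sum>v\<in>nbhd V E u - nbhd W E u. int (deg V E v)) = (\<Sum>v\<in>nbhd V E u - nbhd W E u. 1)"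
  proof (rule sum.cong)
    fix v assume "v \<in> nbhd V E u - nbhd W E u"
    hence "v \<in> V - W" unfolding nbhd_def by blast
    thus "int (deg V E v) = 1" using pend by simp
  qed simp
  also have "\<dots> = int (deg V E u) - int (deg W E u)"
    using sub fin unfolding deg_def by (simp add: card_Diff_subset card_mono finite_subset)
  finally show ?thesis using sum.subset_diff[OF sub fin, of "\<lambda>v. int (deg V E v)"] by simp
qed

lemma attached_deg:
  assumes "in_class_G a b V E" "attached V E W u"
  shows "int (deg V E u) = a + b - 1"
proof -
  obtain p where "pendant V E p" "E u p" using assms(2) unfolding attached_def by blast
  moreover have "E p u" using \<open>E u p\<close> in_class_GD(1)[OF assms(1)] unfolding simple_graph_def by blast
  ultimately show ?thesis using in_class_G_deg_pendant_neighbour[OF assms(1)] unfolding pendant_def by blast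
qed

context
  fixes a b :: int and V W :: "'a set" and E :: "'a \<Rightarrow> 'a \<Rightarrow> bool"
  assumes cl: "in_class_G a b V E" and cyc: "has_cycle V E" and base: "is_base V E W"
begin

private lemma sg: "simple_graph V E"
  using in_class_GD(1)[OF cl] .

private lemma sym: "E u v \<Longrightarrow> E v u"
  using sg unfolding simple_graph_def by blast

private lemmas W_sub = is_base_in_class_GD(1)[OF base cl cyc]
  and pend_outside = is_base_in_class_GD(2)[OF base cl cyc]
  and no_pendant = is_base_in_class_GD(3)[OF base cl cyc]

lemma base_deg_cases:
  assumes "u \<in> W"
  shows "int (deg V E u) \<in> {int (deg W E u), a + b - 1}"
proof (cases "nbhd V E u \<subseteq> W")
  case True
  hence "nbhd W E u = nbhd V E u" using nbhd_subgraph[OF W_sub] by blast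
  thus ?thesis unfolding deg_def by simp
next
  case False
  then obtain z where "z \<in> nbhd V E u" "z \<notin> W" by blast
  hence "deg V E z = 1" "E z u" using pend_outside sym unfolding nbhd_def by auto
  hence "int (deg V E u) = a + b - 1" by (rule in_class_G_deg_pendant_neighbour[OF cl])
  thus ?thesis by simp
qed

lemma attached_deg_base_less:
  assumes "attached V E W u"
  shows "deg W E u < deg V E u"
proof -
  obtain p where "u \<in> W" "pendant V E p" "E u p" using assms unfolding attached_def by blast
  have "p \<notin> W"
  proof
    assume "p \<in> W"
    have "nbhd V E p = {u}" using nbhd_pendant[OF sg _ sym] \<open>pendant V E p\<close> \<open>E u p\<close>
      unfolding pendant_def by blast
    hence "nbhd W E p = {u}" using \<open>u \<in> W\<close> nbhd_subgraph[OF W_sub] by blast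
    hence "pendant W E p" using \<open>p \<in> W\<close> unfolding pendant_def deg_def by simp
    thus False using no_pendant by blast
  qed
  hence "p \<notin> nbhd W E u" unfolding nbhd_def by blast
  moreover have "p \<in> nbhd V E u"
    using \<open>pendant V E p\<close> \<open>E u p\<close> unfolding pendant_def nbhd_def by blast
  ultimately have "nbhd W E u \<subset> nbhd V E u" using nbhd_subgraph[OF W_sub] by blast
  thus ?thesis unfolding deg_def by (rule psubset_card_mono[OF finite_nbhd[OF sg]])
qed

lemma attached_neighbour_degree_sum:
  assumes "attached V E W u"
  shows "(\<Sum>v\<in>nbhd W E u. int (deg V E v)) = - a * b - b ^ 2 + 2 * b + int (deg W E u)"
proof -
  have "u \<in> V" using assms W_sub unfolding attached_def by blast
  define k where "k = int (deg V E u)"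
  have k: "k = a + b - 1" unfolding k_def by (rule attached_deg[OF cl assms])
  have "(\<Sum>v\<in>nbhd W E u. int (deg V E v)) = a * k + b - k ^ 2 - k + int (deg W E u)"
    using in_class_GD(3)[OF cl \<open>u \<in> V\<close>] degree_sum_split_pendants[OF sg W_sub pend_outside, of u]
    unfolding k_def by linarith
  thus ?thesis unfolding k by (simp add: algebra_simps power2_eq_square)
qed

lemma attached_imp_b_le_neg1:
  assumes "attached V E W u"
  shows "b \<le> -1"
proof (rule ccontr)
  assume "\<not> b \<le> -1"
  obtain p where "u \<in> W" "pendant V E p" "E u p" using assms unfolding attached_def by blast
  have "u \<in> V" using \<open>u \<in> W\<close> W_sub by blast
  define dW where "dW = int (deg W E u)"
  have "deg V E u \<ge> 1" using deg_ge_1I[OF simple_graph_finite[OF sg]] \<open>pendant V E p\<close> \<open>E u p\<close>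
    unfolding pendant_def nbhd_def by blast
  hence "b * (int (deg V E u) - 1) \<ge> 0" using \<open>\<not> b \<le> -1\<close> by simp
  hence "(\<Sum>v\<in>nbhd W E u. int (deg V E v)) \<le> dW"
    using attached_neighbour_degree_sum[OF assms] attached_deg[OF cl assms] unfolding dW_def
    by (simp add: algebra_simps power2_eq_square)
  moreover have "(\<Sum>v\<in>nbhd W E u. int (deg V E v)) \<ge> (\<Sum>v\<in>nbhd W E u. 2)"
  proof (rule sum_mono)
    fix v assume "v \<in> nbhd W E u"
    hence "v \<in> W" "u \<in> nbhd W E v" using \<open>u \<in> W\<close> sym unfolding nbhd_def by auto
    hence "deg W E v \<ge> 1" "deg W E v \<noteq> 1"
      using deg_ge_1I[OF finite_subset[OF W_sub simple_graph_finite[OF sg]]] no_pendant unfolding pendant_def by auto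
    thus "int (deg V E v) \<ge> 2" using deg_subgraph_le[OF sg W_sub, of v] by linarith
  qed
  ultimately have "card (nbhd W E u) = 0" unfolding dW_def deg_def by simp
  hence "nbhd W E u = {}"
    using finite_subset[OF _ finite_nbhd[OF sg]] nbhd_subgraph[OF W_sub] by (metis card_0_eq inf_le1)
  hence "\<forall>z\<in>nbhd V E u - {u}. deg V E z = 1"
    using pend_outside nbhd_subgraph[OF W_sub] unfolding nbhd_def by blast
  thus False using double_star_no_cycle[OF sg in_class_GD(2)[OF cl] \<open>u \<in> V\<close>] cyc by blast
qed

end

theorem lemma1p8:
  fixes a b :: int and V :: "'a set" and E :: "'a \<Rightarrow> 'a \<Rightarrow> bool" and W :: "'a set"
  assumes "in_class_G a b V E"
    and "has_cycle V E"
    and "\<exists>p. pendant V E p"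
    and "is_base V E W"
  shows "(\<forall>u\<in>W. int (deg V E u) \<in> {int (deg W E u), a + b - 1})
       \<and> (\<forall>u\<in>V - W. deg V E u = 1)
       \<and> (\<forall>u. attached V E W u \<longrightarrow>
             b \<le> -1
           \<and> int (deg V E u) = a + b - 1
           \<and> a + b - 1 > int (deg W E u)
           \<and> (\<Sum>v\<in>nbhd W E u. int (deg V E v))
               = - a * b - b ^ 2 + 2 * b + int (deg W E u))"
proof (intro conjI allI impI)
  note base_facts = assms(1,2,4)
  show "\<forall>u\<in>W. int (deg V E u) \<in> {int (deg W E u), a + b - 1}"
    using base_deg_cases[OF base_facts] by blast
  show "\<forall>u\<in>V - W. deg V E u = 1"
    using is_base_in_class_GD(2)[OF assms(4,1,2)] .
  fix u assume u: "attached V E W u"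
  show "b \<le> -1" by (rule attached_imp_b_le_neg1[OF base_facts u])
  show deg_u: "int (deg V E u) = a + b - 1" by (rule attached_deg[OF assms(1) u])
  show "a + b - 1 > int (deg W E u)"
    using attached_deg_base_less[OF base_facts u] deg_u by linarith
  show "(\<Sum>v\<in>nbhd W E u. int (deg V E v)) = - a * b - b ^ 2 + 2 * b + int (deg W E u)"
    by (rule attached_neighbour_degree_sum[OF base_facts u])
qed

end
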